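(* Let $Y=\ell_1^N$ (real or complex) and let $m$ be a positive integer. For $j_1,\dots,j_m\in\{1,\dots,N\}$ (not necessarily distinct) define the $m$-homogeneous polynomial $$Q_{j_1,\dots,j_m}(x)=\prod_{k=1}^m e^*_{j_k}(x)+\Big[\sum_{j\in\{j_1,\dots,j_m\}}e^*_j(x)\Big]^m,$$ where the sum runs over the set $\{j_1,\dots,j_m\}$ (each distinct index once). Then $x\in B_Y$ satisfies $|Q_{j_1,\dots,j_m}(x)|=\|Q_{j_1,\dots,j_m}\|$ if and only if $x=\frac{c}{m}\sum_{k=1}^me_{j_k}$ for some scalar $c$ with $|c|=1$. Consequently $Q_{j_1,\dots,j_m}$ strongly attains its norm at $\frac1m\sum_{k=1}^me_{j_k}$.
   Context: $\{e_j\}$ is the canonical basis of $\ell_1^N$ and $\{e_j^*\}$ the coordinate functionals. The norm of a polynomial $P$ is $\|P\|=\sup_{x\in B_Y}|P(x)|$. A nonzero $P$ strongly attains its norm at $x\in B_Y$ if for every sequence $\{x_n\}\subset B_Y$ with $|P(x_n)|\to\|P\|$ there are a scalar $\lambda$ with $|\lambda|=1$ and a subsequence of $\{x_n\}$ converging to $\lambda x$. *)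

theory Defs
  imports "HOL-Analysis.Analysis"
begin

text \<open>The space Y = ell_1^N is modelled as functions from a finite index type 'n
  (with N = CARD('n)) to the scalar field 'a (real or complex).\<close>

definition l1norm :: "('n::finite \<Rightarrow> 'a::real_normed_field) \<Rightarrow> real" where
  "l1norm x = (\<Sum>i\<in>UNIV. norm (x i))"

definition l1ball :: "('n::finite \<Rightarrow> 'a::real_normed_field) set" where
  "l1ball = {x. l1norm x \<le> 1}"

definition unitvec :: "'n::finite \<Rightarrow> 'n \<Rightarrow> 'a::real_normed_field" where
  "unitvec j = (\<lambda>i. if i = j then 1 else 0)"

definition coordf :: "'n::finite \<Rightarrow> ('n \<Rightarrow> 'a::real_normed_field) \<Rightarrow> 'a" where
  "coordf j x = x j"

definition pnorm :: "(('n::finite \<Rightarrow> 'a::real_normed_field) \<Rightarrow> 'a) \<Rightarrow> real" where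
  "pnorm P = (SUP x\<in>l1ball. norm (P x))"

definition strongly_attains :: "(('n::finite \<Rightarrow> 'a::real_normed_field) \<Rightarrow> 'a) \<Rightarrow> ('n \<Rightarrow> 'a) \<Rightarrow> bool" where
  "strongly_attains P x \<longleftrightarrow>
     (\<exists>y\<in>l1ball. P y \<noteq> 0) \<and> x \<in> l1ball \<and>
     (\<forall>xs. (\<forall>n. xs n \<in> l1ball) \<and> (\<lambda>n. norm (P (xs n))) \<longlonglongrightarrow> pnorm P \<longrightarrow>
        (\<exists>c::'a. norm c = 1 \<and> (\<exists>r. strict_mono r \<and>
            (\<lambda>n. l1norm (\<lambda>i. xs (r n) i - c * x i)) \<longlonglongrightarrow> 0)))"

definition Qpoly :: "nat \<Rightarrow> (nat \<Rightarrow> 'n::finite) \<Rightarrow> ('n \<Rightarrow> 'a::real_normed_field) \<Rightarrow> 'a" where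
  "Qpoly m js x = (\<Prod>k=1..m. coordf (js k) x) + (\<Sum>j\<in>js ` {1..m}. coordf j x) ^ m"

end

theory Submission
  imports Defs
begin

text \<open>
  Let S = {j_1, ..., j_m} and let a_j be the multiplicity of j among j_1, ..., j_m.  For x in
  the unit ball of l1^N the triangle inequality gives |Q(x)| <= |x_{j_1} ... x_{j_m}| + |sum_{j in S} x_j|^m.
  The second term is at most 1, and by the weighted AM-GM inequality the first is at most
  P = prod_k (a_{j_k} / m), with equality only if |x_j| = a_j / m on S.  Both bounds are attained
  simultaneously exactly at the points (c/m)(e_{j_1} + ... + e_{j_m}) with |c| = 1, so the norm of Q
  is 1 + P and these are the only maximizers: equality in the triangle inequality for the sum
  over S forces a common phase (an inner product argument valid for real and complex scalars).
  Strong attainment follows by compactness of the unit ball: every maximizing sequence has a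
  subsequence converging to a maximizer, i.e. to c times the base point.
\<close>

text \<open>The strict form of the tangent-line bound for exp at 1; it is what makes the
  equality case of the AM-GM inequality below rigid.\<close>

lemma less_exp_minus_one:
  fixes y :: real assumes "y \<noteq> 1" shows "y < exp (y - 1)"
proof (cases "y > 0")
  case True
  then have "ln y < y - 1"
    using ln_le_minus_one[of y] ln_eq_minus_one[of y] assms by fastforce
  then show ?thesis using True by (metis exp_less_mono exp_ln)
qed (use exp_gt_zero[of "y - 1"] in linarith)

text \<open>Proof: bound each factor y by exp (y - 1).\<close>

lemma am_gm_normalized:
  fixes z :: "'k \<Rightarrow> real"
  assumes fin: "finite K" and z: "\<And>k. k \<in> K \<Longrightarrow> z k \<ge> 0" and s: "(\<Sum>k\<in>K. z k) \<le> 1"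
  shows "(\<Prod>k\<in>K. card K * z k) \<le> 1"
    and "(\<Prod>k\<in>K. card K * z k) = 1 \<Longrightarrow> (\<forall>k\<in>K. card K * z k = 1)"
proof -
  let ?n = "real (card K)"
  have exp_bound: "(\<Prod>k\<in>K. exp (?n * z k - 1)) \<le> 1"
  proof -
    have "(\<Sum>k\<in>K. ?n * z k - 1) = ?n * ((\<Sum>k\<in>K. z k) - 1)"
      by (simp add: sum_subtractf sum_distrib_left right_diff_distrib)
    also have "\<dots> \<le> 0" using s by (simp add: mult_nonneg_nonpos)
    finally show ?thesis using fin by (simp add: exp_sum[symmetric])
  qed
  have factor_le: "0 \<le> ?n * z k \<and> ?n * z k \<le> exp (?n * z k - 1)" if "k \<in> K" for k
    using z[OF that] exp_ge_add_one_self[of "?n * z k - 1"] by simp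
  show "(\<Prod>k\<in>K. ?n * z k) \<le> 1"
    using prod_mono[of K, OF factor_le] exp_bound by (meson order_trans)
  assume eq: "(\<Prod>k\<in>K. ?n * z k) = 1"
  show "\<forall>k\<in>K. ?n * z k = 1"
  proof (rule ccontr)
    assume "\<not> (\<forall>k\<in>K. ?n * z k = 1)"
    then obtain k where "k \<in> K" "?n * z k \<noteq> 1" by blast
    then have "(\<Prod>k\<in>K. ?n * z k) < (\<Prod>k\<in>K. exp (?n * z k - 1))"
      using fin factor_le less_exp_minus_one by (intro prod_mono_strict) auto
    then show False using eq exp_bound by linarith
  qed
qed

text \<open>Over real or complex scalars
  this says that all coordinates share one phase.\<close>

lemma norm_sum_eq_sum_norm_imp_aligned:
  fixes x :: "'i \<Rightarrow> 'a::real_inner"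
  assumes fin: "finite S" and eq: "norm (\<Sum>i\<in>S. x i) = (\<Sum>i\<in>S. norm (x i))" and j: "j \<in> S"
  shows "x j = norm (x j) *\<^sub>R sgn (\<Sum>i\<in>S. x i)"
proof (cases "(\<Sum>i\<in>S. x i) = 0")
  case True
  then have "(\<Sum>i\<in>S. norm (x i)) = 0" using eq by simp
  then have "x j = 0" using fin j by (simp add: sum_nonneg_eq_0_iff)
  then show ?thesis by simp
next
  case False
  define u where "u = sgn (\<Sum>i\<in>S. x i)"
  have nu: "norm u = 1" using False unfolding u_def by (simp add: norm_sgn)
  have cs: "inner u (x i) \<le> norm (x i)" for i
    using norm_cauchy_schwarz[of u "x i"] nu by simp
  have "(\<Sum>i\<in>S. inner u (x i)) = inner u (\<Sum>i\<in>S. x i)" by (simp add: inner_sum_right)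
  also have "\<dots> = norm (\<Sum>i\<in>S. x i)"
    unfolding u_def sgn_div_norm using False by (simp add: power2_norm_eq_inner[symmetric] power2_eq_square)
  finally have "(\<Sum>i\<in>S. norm (x i) - inner u (x i)) = 0"
    using eq by (simp add: sum_subtractf)
  then have "inner u (x j) = norm (x j)"
    using fin j cs by (subst (asm) sum_nonneg_eq_0_iff) auto
  then have "norm u *\<^sub>R x j = norm (x j) *\<^sub>R u"
    using nu norm_cauchy_schwarz_eq[of u "x j"] by simp
  then show ?thesis using nu unfolding u_def by simp
qed

lemma l1ball_partial_sum_le:
  assumes "x \<in> l1ball" shows "(\<Sum>j\<in>A. norm (x j)) \<le> 1"
proof -
  have "(\<Sum>j\<in>A. norm (x j)) \<le> (\<Sum>j\<in>UNIV. norm (x j))" by (rule sum_mono2) auto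
  then show ?thesis using assms unfolding l1ball_def l1norm_def by simp
qed

lemma l1ball_support:
  fixes x :: "'n::finite \<Rightarrow> 'a::real_normed_field"
  assumes x: "x \<in> l1ball" and full: "(\<Sum>j\<in>A. norm (x j)) = 1" and i: "i \<notin> A"
  shows "x i = 0"
proof -
  have "(\<Sum>j\<in>UNIV. norm (x j)) = (\<Sum>j\<in>A. norm (x j)) + (\<Sum>j\<in>UNIV - A. norm (x j))"
    using sum.subset_diff[of A UNIV "\<lambda>j. norm (x j)"] by simp
  then have "(\<Sum>j\<in>UNIV - A. norm (x j)) \<le> 0" using x full unfolding l1ball_def l1norm_def by simp
  then have "(\<Sum>j\<in>UNIV - A. norm (x j)) = 0" by (meson order_antisym sum_nonneg norm_ge_zero)
  then show ?thesis using i by (simp add: sum_nonneg_eq_0_iff)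
qed

lemma maximizing_sequence_subseq:
  fixes f :: "'b::metric_space \<Rightarrow> 'c::t2_space"
  assumes K: "compact K" and f: "continuous_on K f" and xs: "\<And>n. xs n \<in> K"
    and lim: "(\<lambda>n. f (xs n)) \<longlonglongrightarrow> L"
  shows "\<exists>l r. l \<in> K \<and> strict_mono r \<and> (xs \<circ> r) \<longlonglongrightarrow> l \<and> f l = L"
proof -
  obtain l r where l: "l \<in> K" and r: "strict_mono r" and conv: "(xs \<circ> r) \<longlonglongrightarrow> l"
    using compact_imp_seq_compact[OF K] xs unfolding seq_compact_def by metis
  have "(\<lambda>n. f ((xs \<circ> r) n)) \<longlonglongrightarrow> f l"
    using continuous_on_tendsto_compose[OF f conv l] xs by simp
  moreover have "(\<lambda>n. f ((xs \<circ> r) n)) \<longlonglongrightarrow> L"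
    using LIMSEQ_subseq_LIMSEQ[OF lim r] by (simp add: o_def)
  ultimately have "f l = L" by (rule LIMSEQ_unique)
  with l r conv show ?thesis by blast
qed

lemma tendsto_coordinate:
  fixes X :: "nat \<Rightarrow> 'n \<Rightarrow> 'a::topological_space"
  assumes "X \<longlonglongrightarrow> l" shows "(\<lambda>n. X n i) \<longlonglongrightarrow> l i"
  using continuous_on_tendsto_compose[OF continuous_on_product_coordinates[of i] assms] by simp

lemma continuous_on_l1norm:
  "continuous_on UNIV (l1norm :: ('n::finite \<Rightarrow> 'a::real_normed_field) \<Rightarrow> real)"
  unfolding l1norm_def by (intro continuous_intros continuous_on_product_coordinates)

text \<open>The closed unit ball of l1^N is compact: it is a closed subset of the product of
  unit discs (Tychonoff, or simply Heine-Borel in finite dimension).\<close>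

lemma compact_l1ball:
  "compact (l1ball :: ('n::finite \<Rightarrow> 'a::{real_normed_field, heine_borel}) set)"
proof -
  have "compactin (product_topology (\<lambda>_. euclidean) UNIV) (PiE UNIV (\<lambda>_::'n. cball (0::'a) 1))"
    unfolding compactin_PiE by simp
  then have box: "compact (PiE UNIV (\<lambda>_::'n. cball (0::'a) 1))"
    unfolding euclidean_product_topology by simp
  have closed: "closed (l1ball :: ('n \<Rightarrow> 'a) set)"
    unfolding l1ball_def by (intro closed_Collect_le continuous_on_l1norm continuous_on_const)
  have "l1ball \<subseteq> PiE UNIV (\<lambda>_::'n. cball (0::'a) 1)"
    using l1ball_partial_sum_le[where A="{_}"] by (auto simp: PiE_def extensional_def)
  then have "l1ball = PiE UNIV (\<lambda>_::'n. cball (0::'a) 1) \<inter> l1ball" by blast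
  then show ?thesis using compact_Int_closed[OF box closed] by simp
qed

lemma l1norm_dist_tendsto_zero:
  fixes X :: "nat \<Rightarrow> 'n::finite \<Rightarrow> 'a::real_normed_field"
  assumes "X \<longlonglongrightarrow> l" shows "(\<lambda>n. l1norm (\<lambda>i. X n i - l i)) \<longlonglongrightarrow> 0"
proof -
  have "(\<lambda>n. l1norm (\<lambda>i. X n i - l i)) \<longlonglongrightarrow> l1norm (\<lambda>i. l i - l i)"
    unfolding l1norm_def by (intro tendsto_intros tendsto_coordinate[OF assms])
  then show ?thesis by (simp add: l1norm_def)
qed

definition index_count :: "nat \<Rightarrow> (nat \<Rightarrow> 'n) \<Rightarrow> 'n \<Rightarrow> nat" where
  "index_count m js j = card {k\<in>{1..m}. js k = j}"

lemma sum_unitvec_eq_index_count: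
  "(\<Sum>k=1..m. unitvec (js k) i :: 'a::real_normed_field) = of_nat (index_count m js i)"
proof -
  have "(\<Sum>k=1..m. unitvec (js k) i :: 'a) = (\<Sum>k=1..m. of_bool (js k = i))"
    unfolding unitvec_def by (intro sum.cong refl) auto
  also have "\<dots> = of_nat (card ({1..m} \<inter> {k. js k = i}))" by simp
  also have "{1..m} \<inter> {k. js k = i} = {k\<in>{1..m}. js k = i}" by auto
  finally show ?thesis unfolding index_count_def .
qed

lemma index_count_pos:
  assumes "k \<in> {1..m}" shows "index_count m js (js k) \<ge> 1"
proof -
  have "card {k'\<in>{1..m}. js k' = js k} \<noteq> 0"
    using assms by (subst card_0_eq) auto
  then show ?thesis unfolding index_count_def by linarith
qed

lemma index_count_zero: "j \<notin> js ` {1..m} \<Longrightarrow> index_count m js j = 0"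
  unfolding index_count_def by auto

lemma sum_by_index:
  fixes g :: "'n \<Rightarrow> 'b::semiring_1"
  shows "(\<Sum>k=1..m. g (js k)) = (\<Sum>j\<in>js ` {1..m}. of_nat (index_count m js j) * g j)"
proof -
  have "(\<Sum>k=1..m. g (js k)) = (\<Sum>j\<in>js ` {1..m}. \<Sum>k\<in>{k\<in>{1..m}. js k = j}. g (js k))"
    by (rule sum.image_gen) simp
  also have "\<dots> = (\<Sum>j\<in>js ` {1..m}. of_nat (index_count m js j) * g j)"
    unfolding index_count_def by (intro sum.cong refl) simp
  finally show ?thesis .
qed

lemma sum_index_count: "(\<Sum>j\<in>js ` {1..m}. index_count m js j) = m"
  using sum_by_index[where g="\<lambda>_. 1::nat" and m=m and js=js] by simp

lemma sum_index_count_UNIV: "(\<Sum>j\<in>UNIV. index_count m js (j::'n::finite)) = m"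
proof -
  have "(\<Sum>j\<in>UNIV. index_count m js j) = (\<Sum>j\<in>js ` {1..m}. index_count m js j)"
    by (rule sum.mono_neutral_right) (auto simp: index_count_zero)
  also have "\<dots> = m" by (rule sum_index_count)
  finally show ?thesis .
qed

lemma sum_by_index_normalized:
  fixes t :: "'n \<Rightarrow> real"
  shows "(\<Sum>k=1..m. t (js k) / index_count m js (js k)) = (\<Sum>j\<in>js ` {1..m}. t j)"
  unfolding sum_by_index[of "\<lambda>j. t j / index_count m js j"]
proof (intro sum.cong refl)
  fix j assume "j \<in> js ` {1..m}"
  then have "index_count m js j \<ge> 1" using index_count_pos by blast
  then show "of_nat (index_count m js j) * (t j / index_count m js j) = t j" by simp
qed

text \<open>The maximum of |x_{j_1} ... x_{j_m}| on the unit ball, attained at |x_j| = a_j / m: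
  the product over k of a_{j_k} / m.\<close>

definition max_prod :: "nat \<Rightarrow> (nat \<Rightarrow> 'n) \<Rightarrow> real" where
  "max_prod m js = (\<Prod>k=1..m. real (index_count m js (js k)) / real m)"

lemma max_prod_pos:
  assumes "m \<ge> 1" shows "max_prod m js > 0"
  unfolding max_prod_def
proof (intro prod_pos)
  fix k assume "k \<in> {1..m}"
  then show "0 < real (index_count m js (js k)) / real m"
    using index_count_pos[of k m js] assms by simp
qed

text \<open>It is the normalised AM-GM inequality applied to z_k = t (j_k) / a_{j_k}.\<close>

lemma prod_le_max_prod:
  fixes t :: "'n \<Rightarrow> real"
  assumes m: "m \<ge> 1" and t: "\<And>j. t j \<ge> 0" and s: "(\<Sum>j\<in>js ` {1..m}. t j) \<le> 1"
  shows "(\<Prod>k=1..m. t (js k)) \<le> max_prod m js"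
    and "(\<Prod>k=1..m. t (js k)) = max_prod m js \<Longrightarrow> (\<forall>k\<in>{1..m}. t (js k) = index_count m js (js k) / m)"
proof -
  define z where "z k = t (js k) / index_count m js (js k)" for k
  have z0: "\<And>k. k \<in> {1..m} \<Longrightarrow> z k \<ge> 0" unfolding z_def using t by simp
  have zs: "(\<Sum>k\<in>{1..m}. z k) \<le> 1" unfolding z_def sum_by_index_normalized using s .
  note am_gm = am_gm_normalized[OF finite_atLeastAtMost z0 zs, unfolded card_atLeastAtMost diff_Suc_1]
  have factor: "t (js k) = real (index_count m js (js k)) / real m * (real m * z k)" if "k \<in> {1..m}" for k
    using m index_count_pos[OF that, of js] unfolding z_def by simp
  have eq: "(\<Prod>k=1..m. t (js k)) = max_prod m js * (\<Prod>k=1..m. real m * z k)"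
    unfolding max_prod_def prod.distrib[symmetric] using factor by (intro prod.cong) auto
  have pos: "max_prod m js > 0" using max_prod_pos[OF m] .
  show "(\<Prod>k=1..m. t (js k)) \<le> max_prod m js"
    unfolding eq using am_gm(1) pos by (simp add: mult_left_le)
  assume "(\<Prod>k=1..m. t (js k)) = max_prod m js"
  then have "(\<Prod>k=1..m. real m * z k) = 1" unfolding eq using pos by simp
  then have "\<forall>k\<in>{1..m}. real m * z k = 1" using am_gm(2) by blast
  then show "\<forall>k\<in>{1..m}. t (js k) = index_count m js (js k) / m"
    using factor by simp
qed

lemma Qpoly_norm_le:
  "norm (Qpoly m js x) \<le> (\<Prod>k=1..m. norm (x (js k))) + norm (\<Sum>j\<in>js ` {1..m}. x j) ^ m"
proof -
  have "norm (Qpoly m js x) \<le> norm (\<Prod>k=1..m. x (js k)) + norm ((\<Sum>j\<in>js ` {1..m}. x j) ^ m)"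
    unfolding Qpoly_def coordf_def by (rule norm_triangle_ineq)
  then show ?thesis by (simp add: prod_norm norm_power)
qed

lemma Qpoly_norm_le_max:
  fixes x :: "'n::finite \<Rightarrow> 'a::real_normed_field"
  assumes m: "m \<ge> 1" and x: "x \<in> l1ball"
  shows "norm (Qpoly m js x) \<le> 1 + max_prod m js"
proof -
  let ?S = "js ` {1..m}"
  have total: "(\<Sum>j\<in>?S. norm (x j)) \<le> 1" using x by (rule l1ball_partial_sum_le)
  have "(\<Prod>k=1..m. norm (x (js k))) \<le> max_prod m js"
    using prod_le_max_prod(1)[OF m _ total] by simp
  moreover have "norm (\<Sum>j\<in>?S. x j) ^ m \<le> 1"
    using norm_sum[of x ?S] total by (intro power_le_one) auto
  ultimately show ?thesis using Qpoly_norm_le[of m js x] by linarith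
qed

text \<open>The candidate maximizers (c/m)(e_{j_1} + ... + e_{j_m}), with c a unimodular scalar.\<close>

definition extremal_point :: "nat \<Rightarrow> (nat \<Rightarrow> 'n) \<Rightarrow> 'a::real_normed_field \<Rightarrow> 'n \<Rightarrow> 'a" where
  "extremal_point m js c = (\<lambda>i. (c / of_nat m) * of_nat (index_count m js i))"

lemma extremal_point_eq:
  "(\<lambda>i. (c / of_nat m) * (\<Sum>k=1..m. unitvec (js k) i)) = extremal_point m js c"
  unfolding extremal_point_def sum_unitvec_eq_index_count ..

lemma extremal_point_in_l1ball:
  fixes c :: "'a::real_normed_field"
  assumes m: "m \<ge> 1" and c: "norm c = 1"
  shows "(extremal_point m js c :: 'n::finite \<Rightarrow> 'a) \<in> l1ball"
proof -
  have "l1norm (extremal_point m js c :: 'n \<Rightarrow> 'a) = (\<Sum>i\<in>UNIV. real (index_count m js i) / real m)"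
    unfolding l1norm_def extremal_point_def using c by (simp add: norm_mult norm_divide)
  also have "\<dots> = real (\<Sum>i\<in>UNIV. index_count m js i) / real m" by (simp add: sum_divide_distrib)
  also have "\<dots> = 1" using m by (simp add: sum_index_count_UNIV)
  finally show ?thesis unfolding l1ball_def by simp
qed

lemma Qpoly_extremal_point:
  fixes c :: "'a::real_normed_field"
  assumes m: "m \<ge> 1"
  shows "Qpoly m js (extremal_point m js c) = c ^ m * of_real (1 + max_prod m js)"
proof -
  have "(\<Prod>k=1..m. (c / of_nat m) * of_nat (index_count m js (js k)))
      = (\<Prod>k=1..m. c * of_real (real (index_count m js (js k)) / real m))"
    by (intro prod.cong refl) (simp add: field_simps)
  then have prod: "(\<Prod>k=1..m. (c / of_nat m) * of_nat (index_count m js (js k))) = c ^ m * of_real (max_prod m js)"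
    unfolding max_prod_def prod.distrib of_real_prod by simp
  have "(\<Sum>j\<in>js ` {1..m}. (c / of_nat m) * of_nat (index_count m js j))
      = (c / of_nat m) * of_nat (\<Sum>j\<in>js ` {1..m}. index_count m js j)"
    by (simp add: sum_distrib_left)
  then have sum: "(\<Sum>j\<in>js ` {1..m}. (c / of_nat m) * of_nat (index_count m js j)) = c"
    unfolding sum_index_count using m by simp
  show ?thesis unfolding Qpoly_def coordf_def extremal_point_def prod sum by (simp add: algebra_simps)
qed

lemma norm_Qpoly_extremal_point:
  fixes c :: "'a::real_normed_field"
  assumes m: "m \<ge> 1" and c: "norm c = 1"
  shows "norm (Qpoly m js (extremal_point m js c :: 'n::finite \<Rightarrow> 'a)) = 1 + max_prod m js"
  unfolding Qpoly_extremal_point[OF m] norm_mult norm_power norm_of_real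
  using max_prod_pos[OF m, of js] c by simp

lemma pnorm_Qpoly:
  assumes m: "m \<ge> 1"
  shows "pnorm (Qpoly m js :: ('n::finite \<Rightarrow> 'a::real_normed_field) \<Rightarrow> 'a) = 1 + max_prod m js"
  unfolding pnorm_def
proof (rule cSup_eq_maximum)
  have "(extremal_point m js 1 :: 'n \<Rightarrow> 'a) \<in> l1ball"
    by (rule extremal_point_in_l1ball[OF m]) simp
  moreover have "norm (Qpoly m js (extremal_point m js 1 :: 'n \<Rightarrow> 'a)) = 1 + max_prod m js"
    by (rule norm_Qpoly_extremal_point[OF m]) simp
  ultimately show "1 + max_prod m js \<in> (\<lambda>x. norm (Qpoly m js x :: 'a)) ` l1ball"
    by (metis image_eqI)
qed (use Qpoly_norm_le_max[OF m] in blast)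

text \<open>Equality in the bound
  forces equality in both estimates: the product part gives |x_j| = a_j / m on S (hence
  mass 1 on S and x = 0 off S), and |x_{j_1} + ...| = 1 forces a common phase c = sgn s.\<close>

lemma maximizer_is_extremal_point:
  fixes x :: "'n::finite \<Rightarrow> 'a::{real_normed_field, real_inner}"
  assumes m: "m \<ge> 1" and x: "x \<in> l1ball" and attained: "norm (Qpoly m js x) = 1 + max_prod m js"
  shows "\<exists>c. norm c = 1 \<and> x = extremal_point m js c"
proof -
  let ?S = "js ` {1..m}"
  define s where "s = (\<Sum>j\<in>?S. x j)"
  have total: "(\<Sum>j\<in>?S. norm (x j)) \<le> 1" using x by (rule l1ball_partial_sum_le)
  have ns: "norm s \<le> (\<Sum>j\<in>?S. norm (x j))" unfolding s_def by (rule norm_sum)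
  have prod_le: "(\<Prod>k=1..m. norm (x (js k))) \<le> max_prod m js"
    using prod_le_max_prod(1)[OF m _ total] by simp
  have "norm s ^ m \<le> norm s" using ns total m by (intro power_decreasing[of 1, simplified]) auto
  with attained Qpoly_norm_le[of m js x] prod_le ns total
  have prod_eq: "(\<Prod>k=1..m. norm (x (js k))) = max_prod m js" and norm_s: "norm s = 1"
    unfolding s_def by auto
  have full: "(\<Sum>j\<in>?S. norm (x j)) = 1" using norm_s ns total by simp
  have weights: "norm (x (js k)) = index_count m js (js k) / m" if "k \<in> {1..m}" for k
    using prod_le_max_prod(2)[OF m _ total] prod_eq that by simp
  show ?thesis
  proof (intro exI conjI)
    show "norm (sgn s) = 1" using norm_s by (auto simp: norm_sgn)
    show "x = extremal_point m js (sgn s)"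
    proof
      fix i show "x i = extremal_point m js (sgn s) i"
      proof (cases "i \<in> ?S")
        case True
        then obtain k where k: "k \<in> {1..m}" "i = js k" by blast
        have "x i = norm (x i) *\<^sub>R sgn s"
          using norm_sum_eq_sum_norm_imp_aligned[of ?S x i] full norm_s True unfolding s_def by simp
        then show ?thesis using weights[OF k(1)] k(2)
          by (simp add: extremal_point_def scaleR_conv_of_real field_simps)
      next
        case False
        then show ?thesis
          using l1ball_support[OF x full False] index_count_zero[OF False] by (simp add: extremal_point_def)
      qed
    qed
  qed
qed

lemma Qpoly_maximizer_iff:
  fixes x :: "'n::finite \<Rightarrow> 'a::{real_normed_field, real_inner}"
  assumes m: "m \<ge> 1" and x: "x \<in> l1ball"
  shows "norm (Qpoly m js x) = pnorm (Qpoly m js) \<longleftrightarrow> (\<exists>c. norm c = 1 \<and> x = extremal_point m js c)"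
  using maximizer_is_extremal_point[OF m x] norm_Qpoly_extremal_point[OF m]
  by (auto simp: pnorm_Qpoly[OF m])

lemma continuous_on_Qpoly:
  "continuous_on UNIV (Qpoly m js :: ('n::finite \<Rightarrow> 'a::real_normed_field) \<Rightarrow> 'a)"
  unfolding Qpoly_def coordf_def by (intro continuous_intros continuous_on_product_coordinates)

lemma strongly_attains_Qpoly:
  fixes js :: "nat \<Rightarrow> 'n::finite"
  assumes m: "m \<ge> 1"
  shows "strongly_attains (Qpoly m js :: ('n \<Rightarrow> 'a::{real_normed_field, euclidean_space}) \<Rightarrow> 'a)
           (extremal_point m js 1)"
  unfolding strongly_attains_def
proof (intro conjI allI impI)
  have x0: "(extremal_point m js 1 :: 'n \<Rightarrow> 'a) \<in> l1ball"
    by (rule extremal_point_in_l1ball[OF m]) simp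
  then show "extremal_point m js 1 \<in> (l1ball :: ('n \<Rightarrow> 'a) set)" .
  have "norm (Qpoly m js (extremal_point m js 1 :: 'n \<Rightarrow> 'a)) = 1 + max_prod m js"
    by (rule norm_Qpoly_extremal_point[OF m]) simp
  then show "\<exists>y\<in>l1ball. Qpoly m js (y :: 'n \<Rightarrow> 'a) \<noteq> 0"
    using x0 max_prod_pos[OF m, of js] by (intro bexI[of _ "extremal_point m js 1"]) auto
  fix xs :: "nat \<Rightarrow> 'n \<Rightarrow> 'a"
  assume "(\<forall>n. xs n \<in> l1ball) \<and>
    (\<lambda>n. norm (Qpoly m js (xs n))) \<longlonglongrightarrow> pnorm (Qpoly m js :: ('n \<Rightarrow> 'a) \<Rightarrow> 'a)"
  then have xs: "\<And>n. xs n \<in> l1ball"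
    and lim: "(\<lambda>n. norm (Qpoly m js (xs n))) \<longlonglongrightarrow> pnorm (Qpoly m js :: ('n \<Rightarrow> 'a) \<Rightarrow> 'a)"
    by auto
  have cont: "continuous_on l1ball (\<lambda>x. norm (Qpoly m js x :: 'a))"
    using continuous_on_subset[OF continuous_on_norm[OF continuous_on_Qpoly]] by blast
  have "\<exists>l r. l \<in> l1ball \<and> strict_mono r \<and> (xs \<circ> r) \<longlonglongrightarrow> l \<and>
      norm (Qpoly m js l) = pnorm (Qpoly m js :: ('n \<Rightarrow> 'a) \<Rightarrow> 'a)"
    by (rule maximizing_sequence_subseq[OF compact_l1ball cont]) (use xs lim in auto)
  then obtain l r where l: "l \<in> l1ball" and r: "strict_mono r" and conv: "(xs \<circ> r) \<longlonglongrightarrow> l"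
    and l_max: "norm (Qpoly m js l) = pnorm (Qpoly m js :: ('n \<Rightarrow> 'a) \<Rightarrow> 'a)"
    by blast
  obtain c :: 'a where c: "norm c = 1" and lc: "l = extremal_point m js c"
    using Qpoly_maximizer_iff[OF m l] l_max by blast
  have "l i = c * extremal_point m js 1 i" for i unfolding lc extremal_point_def by simp
  then have "(\<lambda>n. l1norm (\<lambda>i. xs (r n) i - c * extremal_point m js 1 i)) \<longlonglongrightarrow> 0"
    using l1norm_dist_tendsto_zero[OF conv] by (simp add: o_def)
  with c r show "\<exists>c::'a. norm c = 1 \<and> (\<exists>r. strict_mono r \<and>
      (\<lambda>n. l1norm (\<lambda>i. xs (r n) i - c * extremal_point m js 1 i)) \<longlonglongrightarrow> 0)" by blast
qed

theorem lemma4p4: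
  fixes m :: nat and js :: "nat \<Rightarrow> 'n::finite"
  assumes "m \<ge> 1"
  shows "(\<forall>x::'n \<Rightarrow> real. x \<in> l1ball \<longrightarrow>
            (norm (Qpoly m js x) = pnorm (Qpoly m js) \<longleftrightarrow>
             (\<exists>c::real. norm c = 1 \<and> x = (\<lambda>i. (c / of_nat m) * (\<Sum>k=1..m. unitvec (js k) i)))))
       \<and> strongly_attains (Qpoly m js :: ('n \<Rightarrow> real) \<Rightarrow> real)
            (\<lambda>i. (1 / of_nat m) * (\<Sum>k=1..m. unitvec (js k) i))
       \<and> (\<forall>x::'n \<Rightarrow> complex. x \<in> l1ball \<longrightarrow>
            (norm (Qpoly m js x) = pnorm (Qpoly m js) \<longleftrightarrow>
             (\<exists>c::complex. norm c = 1 \<and> x = (\<lambda>i. (c / of_nat m) * (\<Sum>k=1..m. unitvec (js k) i)))))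
       \<and> strongly_attains (Qpoly m js :: ('n \<Rightarrow> complex) \<Rightarrow> complex)
            (\<lambda>i. (1 / of_nat m) * (\<Sum>k=1..m. unitvec (js k) i))"
  unfolding extremal_point_eq
  using Qpoly_maximizer_iff[OF assms, where 'a=real] strongly_attains_Qpoly[OF assms, where 'a=real]
    Qpoly_maximizer_iff[OF assms, where 'a=complex] strongly_attains_Qpoly[OF assms, where 'a=complex]
  by (intro conjI allI impI) simp_all

end
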